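(* There exists $c\in(0,1)$ such that for all $m,n,k\in\mathbb N$, $$\P\big(\tau^{(m)}_k\le n\big)\le\Big(\frac{n(\log m+1)}{c\,k\,m}\wedge1\Big)^{\frac{ck}{\log m+1}}.$$ Equivalently, for all $m\in\mathbb N$ and $s,t\in(0,\infty)$, $\P\big(\tau^{(m)}_{\lfloor s(\log m+1)\rfloor}\le tm\big)\le e^{-cs\log^+(\frac{cs}{t})}$.
   Context: Positive reals $r(n)=\frac an(1+o(1))$, $a\in(0,\infty)$, $R_m=\sum_{n\le m}r(n)$; $(T^{(m)}_i)$ i.i.d. with $\P(T^{(m)}_i=n)=\frac{r(n)}{R_m}\mathbf1_{\{1,\dots,m\}}(n)$; $\tau^{(m)}_k=\sum_{i\le k}T^{(m)}_i$. $\log^+x=\max(\log x,0)$. *)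

theory Defs
  imports "HOL-Probability.Probability"
begin

definition R :: "(nat \<Rightarrow> real) \<Rightarrow> nat \<Rightarrow> real" where
  "R r m = (\<Sum>n=1..m. r n)"

definition T_pmf :: "(nat \<Rightarrow> real) \<Rightarrow> nat \<Rightarrow> nat pmf" where
  "T_pmf r m = embed_pmf (\<lambda>n. if n \<in> {1..m} then r n / R r m else 0)"

definition tau_pmf :: "(nat \<Rightarrow> real) \<Rightarrow> nat \<Rightarrow> nat \<Rightarrow> nat pmf" where
  "tau_pmf r m k = map_pmf (\<lambda>T. \<Sum>i<k. T i) (Pi_pmf {..<k} 0 (\<lambda>_. T_pmf r m))"

end

theory Submission
  imports Defs
begin

text \<open>
  The hypothesis gives \<open>B/j \<le> r j \<le> A/j\<close>, hence \<open>R r m \<le> A (log m + 1)\<close> while \<open>T\<close> puts mass at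
  least \<open>B log ((m+1)/(J+1)) / R r m\<close> beyond \<open>J\<close>. Bounding the indicator of \<open>{\<tau>\<^sub>k \<le> n}\<close> by
  \<open>exp ((n - \<tau>\<^sub>k)/J)\<close> and using independence gives \<open>P(\<tau>\<^sub>k \<le> n) \<le> exp (n/J - k P(T > J)/2)\<close>.
  For \<open>J = \<lceil>n (log m + 1)/k\<rceil>\<close> the first term is at most \<open>k/(log m + 1)\<close>, and the second is
  larger by a factor of order \<open>(B/A) log (m/J)\<close>, which wins once \<open>c\<close> is small compared with \<open>B/A\<close>.
\<close>

lemma harmonic_le_ln_plus_one:
  assumes "m \<ge> 1"
  shows "(\<Sum>j=1..m. 1 / real j) \<le> ln (real m) + 1"
  using assms
proof (induction m rule: nat_induct_at_least)
  case base
  then show ?case by simp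
next
  case (Suc m)
  have m: "real m > 0" using Suc by simp
  have "ln (real m / (real m + 1)) \<le> real m / (real m + 1) - 1"
    by (rule ln_le_minus_one) (use m in simp)
  also have "\<dots> = - 1 / (real m + 1)" using m by (simp add: field_simps)
  finally have "1 / (real m + 1) \<le> ln (real m + 1) - ln (real m)"
    using m by (simp add: ln_div)
  then show ?case using Suc.IH by (simp add: add.commute)
qed

lemma ln_ratio_le_harmonic_tail:
  "ln ((real m + 1) / (real J + 1)) \<le> (\<Sum>j=Suc J..m. 1 / real j)"
proof (induction m)
  case 0
  then show ?case by simp
next
  case (Suc m)
  show ?case
  proof (cases "Suc m \<le> J")
    case True
    then have "ln ((real (Suc m) + 1) / (real J + 1)) \<le> 0" by simp
    moreover have "0 \<le> (\<Sum>j=Suc J..Suc m. 1 / real j)" by (intro sum_nonneg) simp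
    ultimately show ?thesis by linarith
  next
    case False
    then have eq: "(\<Sum>j=Suc J..Suc m. 1 / real j) = (\<Sum>j=Suc J..m. 1 / real j) + 1 / real (Suc m)"
      by (subst sum.cl_ivl_Suc) simp
    have "ln ((real m + 2) / (real m + 1)) \<le> (real m + 2) / (real m + 1) - 1"
      by (rule ln_le_minus_one) simp
    also have "\<dots> = 1 / (real m + 1)" by (simp add: field_simps)
    finally have "ln ((real m + 2) / (real J + 1)) - ln ((real m + 1) / (real J + 1)) \<le> 1 / (real m + 1)"
      by (simp add: ln_div)
    then show ?thesis using Suc eq by (simp add: add.commute)
  qed
qed

lemma ln_3_le_2: "ln (3::real) \<le> 2"
proof -
  have "3 \<le> exp (2::real)" using exp_ge_add_one_self[of 2] by simp
  then show ?thesis by (metis exp_le_cancel_iff exp_ln zero_less_numeral less_le_trans)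
qed

lemma exp_minus_one_le_half: "exp (-1::real) \<le> 1/2"
proof -
  have "2 \<le> exp (1::real)" using exp_ge_add_one_self[of 1] by simp
  then show ?thesis by (simp add: exp_minus field_simps)
qed

context
  fixes r :: "nat \<Rightarrow> real" and m :: nat
  assumes r_pos: "\<And>n. n \<ge> 1 \<Longrightarrow> 0 < r n" and m_ge_1: "m \<ge> 1"
begin

lemma R_pos: "R r m > 0"
  unfolding R_def using m_ge_1 r_pos by (intro sum_pos) auto

lemma pmf_T_pmf: "pmf (T_pmf r m) j = (if j \<in> {1..m} then r j / R r m else 0)"
  unfolding T_pmf_def
proof (rule pmf_embed_pmf)
  show "0 \<le> (if x \<in> {1..m} then r x / R r m else 0)" for x
    using r_pos[of x] R_pos by auto
  have "(\<integral>\<^sup>+ x. ennreal (if x \<in> {1..m} then r x / R r m else 0) \<partial>count_space UNIV)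
      = (\<Sum>x\<in>{1..m}. ennreal (if x \<in> {1..m} then r x / R r m else 0))"
    by (rule nn_integral_count_space') auto
  also have "\<dots> = ennreal (\<Sum>x\<in>{1..m}. r x / R r m)"
    using r_pos R_pos by (subst sum_ennreal) (auto intro!: divide_nonneg_pos less_imp_le)
  also have "(\<Sum>x\<in>{1..m}. r x / R r m) = 1"
    using R_pos by (simp add: sum_divide_distrib[symmetric] R_def)
  finally show "(\<integral>\<^sup>+ x. ennreal (if x \<in> {1..m} then r x / R r m else 0) \<partial>count_space UNIV) = 1"
    by simp
qed

lemma set_pmf_T_pmf: "set_pmf (T_pmf r m) \<subseteq> {1..m}"
  by (auto simp: set_pmf_eq pmf_T_pmf split: if_splits)

lemma expectation_T_pmf:
  "measure_pmf.expectation (T_pmf r m) f = (\<Sum>j=1..m. f j * r j) / R r m"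
proof -
  have "measure_pmf.expectation (T_pmf r m) f = (\<Sum>j\<in>{1..m}. f j * pmf (T_pmf r m) j)"
    by (rule integral_measure_pmf_real) (use set_pmf_T_pmf in auto)
  also have "\<dots> = (\<Sum>j=1..m. f j * r j) / R r m"
    by (simp add: pmf_T_pmf sum_divide_distrib)
  finally show ?thesis .
qed

lemma laplace_tau_pmf:
  "measure_pmf.expectation (tau_pmf r m k) (\<lambda>s. exp (- l * real s))
     = (measure_pmf.expectation (T_pmf r m) (\<lambda>j. exp (- l * real j))) ^ k"
proof -
  have "measure_pmf.expectation (tau_pmf r m k) (\<lambda>s. exp (- l * real s))
     = measure_pmf.expectation (Pi_pmf {..<k} 0 (\<lambda>_. T_pmf r m))
         (\<lambda>T. \<Prod>i\<in>{..<k}. exp (- l * real (T i)))"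
    unfolding tau_pmf_def
    by (simp add: exp_sum[symmetric] sum_distrib_left sum_negf)
  also have "\<dots> = (\<Prod>i\<in>{..<k}. measure_pmf.expectation (T_pmf r m) (\<lambda>j. exp (- l * real j)))"
    by (rule expectation_prod_Pi_pmf)
       (auto intro!: integrable_measure_pmf_finite finite_subset[OF set_pmf_T_pmf])
  finally show ?thesis by simp
qed

lemma set_pmf_tau_pmf_ge:
  assumes "s \<in> set_pmf (tau_pmf r m k)"
  shows "k \<le> s"
proof -
  obtain T where T: "T \<in> set_pmf (Pi_pmf {..<k} 0 (\<lambda>_. T_pmf r m))" and s: "s = (\<Sum>i<k. T i)"
    using assms unfolding tau_pmf_def by auto
  have "\<forall>i<k. T i \<in> set_pmf (T_pmf r m)"
    using T by (auto simp: set_Pi_pmf PiE_dflt_def)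
  then have "\<forall>i<k. 1 \<le> T i" using set_pmf_T_pmf by fastforce
  then have "(\<Sum>i<k. (1::nat)) \<le> (\<Sum>i<k. T i)" by (intro sum_mono) auto
  then show ?thesis using s by simp
qed

lemma prob_tau_pmf_atMost_eq_0:
  assumes "n < k"
  shows "measure_pmf.prob (tau_pmf r m k) {..n} = 0"
proof -
  have "set_pmf (tau_pmf r m k) \<inter> {..n} = {}"
    using set_pmf_tau_pmf_ge assms by fastforce
  then show ?thesis by (simp add: measure_pmf_zero_iff)
qed

lemma prob_tau_pmf_atMost_le_laplace:
  assumes "l \<ge> 0"
  shows "measure_pmf.prob (tau_pmf r m k) {..n}
    \<le> exp (l * real n) * measure_pmf.expectation (tau_pmf r m k) (\<lambda>s. exp (- l * real s))"
proof -
  have "measure_pmf.prob (tau_pmf r m k) {..n}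
      = measure_pmf.expectation (tau_pmf r m k) (indicator {..n})"
    by simp
  also have "\<dots> \<le> measure_pmf.expectation (tau_pmf r m k) (\<lambda>s. exp (l * real n) * exp (- l * real s))"
  proof (rule integral_mono)
    show "integrable (measure_pmf (tau_pmf r m k)) (indicator {..n} :: nat \<Rightarrow> real)"
      by (rule measure_pmf.integrable_const_bound[where B=1]) (auto split: split_indicator)
    show "integrable (measure_pmf (tau_pmf r m k)) (\<lambda>s. exp (l * real n) * exp (- l * real s))"
      by (rule measure_pmf.integrable_const_bound[where B="exp (l * real n)"]) (use assms in auto)
    fix s :: nat
    show "indicator {..n} s \<le> exp (l * real n) * exp (- l * real s)"
    proof (cases "s \<le> n")
      case True
      then have "l * real s \<le> l * real n" using assms by (intro mult_left_mono) auto
      then show ?thesis using True by (simp add: mult_exp_exp)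
    qed auto
  qed
  finally show ?thesis by simp
qed

text \<open>At \<open>l = 1/J\<close> every \<open>j > J\<close> has \<open>exp (- l j) \<le> 1/2\<close>, so the tail mass beyond \<open>J\<close> lowers the
  Laplace transform by half its weight.\<close>
lemma laplace_T_pmf_le:
  assumes J: "J \<ge> (1::nat)"
  shows "measure_pmf.expectation (T_pmf r m) (\<lambda>j. exp (- (1 / real J) * real j))
     \<le> exp (- (\<Sum>j=Suc J..m. r j) / (2 * R r m))"
proof -
  define S where "S = (\<Sum>j=Suc J..m. r j)"
  have pointwise: "exp (- (1 / real J) * real j) * r j \<le> r j - (1/2) * (if J < j then r j else 0)"
    if "j \<in> {1..m}" for j
  proof -
    have rj: "0 < r j" using that r_pos by auto
    show ?thesis
    proof (cases "J < j")
      case True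
      then have "- (1 / real J) * real j \<le> -1" using J by (simp add: field_simps)
      then have "exp (- (1 / real J) * real j) \<le> 1/2"
        using exp_minus_one_le_half by (meson exp_le_cancel_iff order_trans)
      then show ?thesis using True rj by simp
    next
      case False
      have "exp (- (1 / real J) * real j) \<le> 1" using J by simp
      then show ?thesis using False rj by simp
    qed
  qed
  have tail: "(\<Sum>j\<in>{1..m}. (if J < j then r j else 0)) = S"
  proof -
    have "(\<Sum>j\<in>{1..m}. (if J < j then r j else 0)) = (\<Sum>j\<in>{x\<in>{1..m}. J < x}. r j)"
      by (rule sum.inter_filter[symmetric]) simp
    also have "{x\<in>{1..m}. J < x} = {Suc J..m}" by auto
    finally show ?thesis by (simp add: S_def)
  qed
  have "(\<Sum>j=1..m. exp (- (1 / real J) * real j) * r j)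
      \<le> (\<Sum>j=1..m. r j - (1/2) * (if J < j then r j else 0))"
    by (rule sum_mono) (rule pointwise)
  also have "\<dots> = R r m - (1/2) * (\<Sum>j\<in>{1..m}. (if J < j then r j else 0))"
    by (simp add: sum_subtractf sum_distrib_left R_def)
  finally have "(\<Sum>j=1..m. exp (- (1 / real J) * real j) * r j) / R r m \<le> (R r m - S/2) / R r m"
    unfolding tail using R_pos by (intro divide_right_mono) auto
  also have "\<dots> = 1 + (- S / (2 * R r m))" using R_pos by (simp add: field_simps)
  also have "\<dots> \<le> exp (- S / (2 * R r m))" by (rule exp_ge_add_one_self)
  finally show ?thesis by (simp add: expectation_T_pmf S_def)
qed

lemma prob_tau_pmf_atMost_le_exp:
  assumes "J \<ge> 1"
  shows "measure_pmf.prob (tau_pmf r m k) {..n}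
    \<le> exp (real n / real J - real k * ((\<Sum>j=Suc J..m. r j) / (2 * R r m)))"
proof -
  let ?E = "measure_pmf.expectation (T_pmf r m) (\<lambda>j. exp (- (1 / real J) * real j))"
  have "measure_pmf.prob (tau_pmf r m k) {..n}
      \<le> exp (1 / real J * real n)
        * measure_pmf.expectation (tau_pmf r m k) (\<lambda>s. exp (- (1 / real J) * real s))"
    by (rule prob_tau_pmf_atMost_le_laplace) simp
  also have "\<dots> = exp (real n / real J) * ?E ^ k"
    by (simp only: laplace_tau_pmf) simp
  also have "\<dots> \<le> exp (real n / real J) * exp (- (\<Sum>j=Suc J..m. r j) / (2 * R r m)) ^ k"
    using laplace_T_pmf_le[OF assms]
    by (intro mult_left_mono power_mono) (auto intro!: integral_nonneg_AE)
  also have "\<dots> = exp (real n / real J - real k * ((\<Sum>j=Suc J..m. r j) / (2 * R r m)))"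
    by (simp add: exp_of_nat_mult[symmetric] exp_add[symmetric] exp_diff)
  finally show ?thesis .
qed

end

lemma chernoff_exponent_arith:
  fixes \<beta> c w l :: real
  assumes \<beta>: "0 < \<beta>" and c: "0 < c" "c \<le> \<beta> / 4" "c \<le> exp (- (4 / \<beta> + 4))"
    and cw: "1 < c * w" and l: "ln w - ln 3 \<le> l"
  shows "1 - \<beta> * l / 2 \<le> c * ln (1 / (c * w))"
proof -
  have "0 < c * w" using cw by simp
  then have w: "0 < w" using c(1) by (simp add: zero_less_mult_iff)
  have ln_c: "ln c \<le> - (4 / \<beta> + 4)" using ln_mono[OF c(3) c(1)] by simp
  have "0 < ln (c * w)" using cw by simp
  then have "0 < ln c + ln w" using c(1) w by (simp add: ln_mult)
  then have ln_w: "4 / \<beta> + 4 \<le> ln w" using ln_c by linarith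
  have "0 < 4 / \<beta>" using \<beta> by simp
  then have "ln c \<le> 0" using ln_c by linarith
  then have "c * ln c \<le> 0" using c(1) by (simp add: mult_nonneg_nonpos)
  moreover have "\<beta> * (ln w - ln 3) \<le> \<beta> * l" using \<beta> l by simp
  moreover have "(\<beta>/4) * (4/\<beta> + 4) \<le> (\<beta>/2 - c) * ln w"
    using \<beta> c(2) ln_w by (intro mult_mono) auto
  moreover have "(\<beta>/4) * (4/\<beta> + 4) = 1 + \<beta>" using \<beta> by (simp add: field_simps)
  moreover have "\<beta> * ln 3 \<le> 2 * \<beta>" using ln_3_le_2 \<beta> by simp
  moreover have "c * ln (1 / (c * w)) = - c * ln c - c * ln w"
    using c(1) w by (simp add: ln_div ln_mult algebra_simps)
  ultimately show ?thesis by (simp add: algebra_simps)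
qed

locale harmonic_weights =
  fixes r :: "nat \<Rightarrow> real" and A B :: real
  assumes B_pos: "0 < B"
    and r_lower: "\<And>j. j \<ge> 1 \<Longrightarrow> B / real j \<le> r j"
    and r_upper: "\<And>j. j \<ge> 1 \<Longrightarrow> r j \<le> A / real j"
begin

lemma r_pos:
  assumes "j \<ge> 1"
  shows "0 < r j"
proof -
  have "0 < B / real j" using B_pos assms by simp
  also have "\<dots> \<le> r j" using r_lower assms .
  finally show ?thesis .
qed

lemma B_le_A: "B \<le> A"
  using r_lower[of 1] r_upper[of 1] by simp

lemma R_le: "m \<ge> 1 \<Longrightarrow> R r m \<le> A * (ln (real m) + 1)"
proof -
  assume m: "m \<ge> 1"
  have "R r m \<le> (\<Sum>j=1..m. A / real j)" unfolding R_def by (intro sum_mono r_upper) auto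
  also have "\<dots> = A * (\<Sum>j=1..m. 1 / real j)" by (simp add: sum_distrib_left)
  also have "\<dots> \<le> A * (ln (real m) + 1)"
    using B_pos B_le_A m by (intro mult_left_mono harmonic_le_ln_plus_one) auto
  finally show ?thesis .
qed

lemma tail_sum_ge: "B * ln ((real m + 1) / (real J + 1)) \<le> (\<Sum>j=Suc J..m. r j)"
proof -
  have "B * ln ((real m + 1) / (real J + 1)) \<le> B * (\<Sum>j=Suc J..m. 1 / real j)"
    using B_pos by (intro mult_left_mono ln_ratio_le_harmonic_tail) auto
  also have "\<dots> = (\<Sum>j=Suc J..m. B / real j)" by (simp add: sum_distrib_left)
  also have "\<dots> \<le> (\<Sum>j=Suc J..m. r j)" by (intro sum_mono r_lower) auto
  finally show ?thesis .
qed

lemma tail_ratio_ge: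
  assumes "m \<ge> 1"
  shows "B / A * ln ((real m + 1) / (real J + 1)) / (2 * (ln (real m) + 1))
    \<le> (\<Sum>j=Suc J..m. r j) / (2 * R r m)"
proof -
  let ?l = "ln ((real m + 1) / (real J + 1))" and ?S = "\<Sum>j=Suc J..m. r j"
  have R: "0 < R r m" using R_pos[of r, OF r_pos assms] .
  have L: "ln (real m) + 1 \<ge> 1" using assms by simp
  have A: "0 < A" using B_pos B_le_A by linarith
  have S: "0 \<le> ?S" using r_pos by (intro sum_nonneg) (auto intro: less_imp_le)
  show ?thesis
  proof (cases "B * ?l \<ge> 0")
    case True
    have "B / A * ?l / (2 * (ln (real m) + 1)) = B * ?l / (2 * (A * (ln (real m) + 1)))"
      using A by simp
    also have "\<dots> \<le> B * ?l / (2 * R r m)"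
      using True R L A R_le[OF assms] by (intro divide_left_mono mult_left_mono) auto
    also have "\<dots> \<le> ?S / (2 * R r m)" using tail_sum_ge R by (intro divide_right_mono) auto
    finally show ?thesis .
  next
    case False
    then have "B / A * ?l / (2 * (ln (real m) + 1)) \<le> 0"
      using A L by (simp add: divide_nonpos_pos mult.commute[of B])
    also have "0 \<le> ?S / (2 * R r m)" using S R by simp
    finally show ?thesis .
  qed
qed

lemma prob_tau_pmf_atMost_le_tilted:
  assumes m: "m \<ge> 1" and J: "J \<ge> 1" and nJ: "real n * (ln (real m) + 1) \<le> real J * real k"
  shows "measure_pmf.prob (tau_pmf r m k) {..n}
    \<le> exp (real k / (ln (real m) + 1) * (1 - B / A * ln ((real m + 1) / (real J + 1)) / 2))"
proof -
  define L where "L = ln (real m) + 1"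
  let ?l = "ln ((real m + 1) / (real J + 1))" and ?S = "\<Sum>j=Suc J..m. r j"
  have L: "L \<ge> 1" using m by (simp add: L_def)
  have "real n / real J \<le> real k / L" using nJ J L by (simp add: L_def field_simps)
  moreover have "B / A * ?l / (2 * L) \<le> ?S / (2 * R r m)"
    using tail_ratio_ge[OF m] by (simp add: L_def)
  then have "real k * (B / A * ?l / (2 * L)) \<le> real k * (?S / (2 * R r m))"
    by (rule mult_left_mono) simp
  moreover have "real k / L * (1 - B / A * ?l / 2) = real k / L - real k * (B / A * ?l / (2 * L))"
    using L by (simp add: field_simps)
  ultimately have "real n / real J - real k * (?S / (2 * R r m)) \<le> real k / L * (1 - B / A * ?l / 2)"
    by linarith
  then show ?thesis
    using prob_tau_pmf_atMost_le_exp[of r, OF r_pos m J, of k n]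
    unfolding L_def by (meson exp_le_cancel_iff order_trans)
qed

text \<open>With \<open>J = \<lceil>n L / k\<rceil>\<close> we have \<open>n/J \<le> k/L\<close> and \<open>(m+1)/(J+1) \<ge> w/3\<close>, where \<open>w = 1/(c x)\<close>.\<close>
lemma prob_tau_pmf_atMost_le_powr:
  fixes m n k :: nat and c :: real
  defines "L \<equiv> ln (real m) + 1"
  defines "x \<equiv> real n * L / (c * real k * real m)"
  assumes c: "0 < c" "c \<le> B / (4 * A)" "c \<le> exp (- 4 * (A / B + 1))"
    and mnk: "m \<ge> 1" "n \<ge> 1" "k \<ge> 1" "k \<le> n" and x: "x < 1"
  shows "measure_pmf.prob (tau_pmf r m k) {..n} \<le> x powr (c * real k / L)"
proof -
  define \<beta> where "\<beta> = B / A"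
  have \<beta>: "0 < \<beta>" using B_pos B_le_A by (simp add: \<beta>_def)
  have "- (4 / \<beta> + 4) = - 4 * (A / B + 1)" by (simp add: \<beta>_def algebra_simps)
  then have c': "c \<le> \<beta> / 4" "c \<le> exp (- (4 / \<beta> + 4))"
    using c(2,3) by (simp_all add: \<beta>_def)
  have L1: "L \<ge> 1" using mnk by (simp add: L_def)
  define w where "w = real k * real m / (real n * L)"
  have xw: "x = 1 / (c * w)" using c L1 mnk by (simp add: x_def w_def field_simps)
  have w: "0 < w" using mnk L1 by (simp add: w_def)
  have cw: "1 < c * w" using x xw c w by (simp add: field_simps)
  define y where "y = real n * L / real k"
  have "real k \<le> real n" using mnk by simp
  also have "\<dots> \<le> real n * L" using L1 mult_left_mono[of 1 L "real n"] by simp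
  finally have y1: "y \<ge> 1" using mnk by (simp add: y_def field_simps)
  define J where "J = nat \<lceil>y\<rceil>"
  have J: "J \<ge> 1" "y \<le> real J" "real J + 1 \<le> 3 * y" using y1 unfolding J_def by linarith+
  have nJ: "real n * L \<le> real J * real k" using J(2) mnk by (simp add: y_def field_simps)
  define l where "l = ln ((real m + 1) / (real J + 1))"
  have "w / 3 \<le> (real m + 1) / (real J + 1)"
  proof -
    have "w / 3 = real m / (3 * y)" using mnk by (simp add: w_def y_def field_simps)
    also have "\<dots> \<le> real m / (real J + 1)" using J y1 by (intro divide_left_mono) auto
    also have "\<dots> \<le> (real m + 1) / (real J + 1)" by (intro divide_right_mono) auto
    finally show ?thesis .
  qed
  then have "ln (w / 3) \<le> l" unfolding l_def using w by simp
  then have l: "ln w - ln 3 \<le> l" using w by (simp add: ln_div)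
  have "measure_pmf.prob (tau_pmf r m k) {..n} \<le> exp (real k / L * (1 - \<beta> * l / 2))"
    using prob_tau_pmf_atMost_le_tilted[OF mnk(1) J(1)] nJ by (simp add: L_def \<beta>_def l_def)
  also have "\<dots> \<le> exp (real k / L * (c * ln x))"
    unfolding exp_le_cancel_iff xw using chernoff_exponent_arith[OF \<beta> c(1) c' cw l] L1
    by (intro mult_left_mono) auto
  also have "\<dots> = x powr (c * real k / L)"
    using xw c w by (simp add: powr_def algebra_simps)
  finally show ?thesis .
qed

lemma prob_tau_pmf_atMost_le:
  fixes c :: real
  assumes c: "0 < c" "c \<le> B / (4 * A)" "c \<le> exp (- 4 * (A / B + 1))"
    and mnk: "m \<ge> 1" "n \<ge> 1" "k \<ge> 1"
  shows "measure_pmf.prob (tau_pmf r m k) {..n}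
    \<le> (min (real n * (ln (real m) + 1) / (c * real k * real m)) 1)
         powr (c * real k / (ln (real m) + 1))"
    (is "_ \<le> (min ?x 1) powr _")
proof -
  consider "n < k" | "?x \<ge> 1" | "k \<le> n" "?x < 1" by linarith
  then show ?thesis
  proof cases
    case 1
    then show ?thesis using prob_tau_pmf_atMost_eq_0[of r, OF r_pos mnk(1)] by simp
  next
    case 2
    then show ?thesis using measure_pmf.prob_le_1 by simp
  next
    case 3
    then show ?thesis using prob_tau_pmf_atMost_le_powr[OF c mnk] by simp
  qed
qed

end

lemma harmonic_weights_of_asymp:
  fixes r :: "nat \<Rightarrow> real" and a :: real
  assumes "0 < a" and r_pos: "\<And>n. n \<ge> 1 \<Longrightarrow> 0 < r n"
    and r_asymp: "(\<lambda>n. real n * r n) \<longlonglongrightarrow> a"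
  obtains A B where "harmonic_weights r A B"
proof -
  have "Bseq (\<lambda>n. real n * r n)" using r_asymp by (intro convergent_imp_Bseq convergentI)
  then obtain A where A: "\<And>j. norm (real j * r j) \<le> A" unfolding Bseq_def by blast
  have "eventually (\<lambda>j. a/2 < real j * r j) sequentially"
    using order_tendstoD(1)[OF r_asymp, of "a/2"] assms(1) by simp
  then obtain N where N: "\<And>j. j \<ge> N \<Longrightarrow> a/2 < real j * r j"
    unfolding eventually_sequentially by blast
  define B where "B = Min (insert (a/2) ((\<lambda>j. real j * r j) ` {1..N}))"
  have B_pos: "B > 0" unfolding B_def using assms(1) r_pos by (auto simp: Min_gr_iff)
  have "B \<le> real j * r j" if "j \<ge> 1" for j
  proof (cases "j \<ge> N")
    case True
    have "B \<le> a/2" unfolding B_def by (rule Min_le) auto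
    then show ?thesis using N[OF True] by simp
  next
    case False
    then show ?thesis unfolding B_def using that by (intro Min_le) auto
  qed
  then have "harmonic_weights r A B"
    using A B_pos by unfold_locales (auto simp: field_simps abs_le_iff)
  then show ?thesis by (rule that)
qed

theorem mainTheorem15:
  fixes r :: "nat \<Rightarrow> real" and a :: real
  assumes a_pos: "0 < a"
    and r_pos: "\<And>n. n \<ge> 1 \<Longrightarrow> 0 < r n"
    and r_asymp: "(\<lambda>n. real n * r n) \<longlonglongrightarrow> a"
  shows "\<exists>c::real. 0 < c \<and> c < 1 \<and>
    (\<forall>m n k :: nat. m \<ge> 1 \<longrightarrow> n \<ge> 1 \<longrightarrow> k \<ge> 1 \<longrightarrow>
       measure_pmf.prob (tau_pmf r m k) {..n}
         \<le> (min (real n * (ln (real m) + 1) / (c * real k * real m)) 1)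
              powr (c * real k / (ln (real m) + 1)))"
proof -
  obtain A B where hw: "harmonic_weights r A B"
    using harmonic_weights_of_asymp[OF a_pos r_pos r_asymp] by blast
  define c where "c = min (B / (4 * A)) (exp (- 4 * (A / B + 1)))"
  have "0 < B" "B \<le> A"
    using harmonic_weights.B_pos[OF hw] harmonic_weights.B_le_A[OF hw] by auto
  then have "0 < c" "c < 1" by (auto simp: c_def min_less_iff_disj)
  moreover have "c \<le> B / (4 * A)" "c \<le> exp (- 4 * (A / B + 1))" by (simp_all add: c_def)
  ultimately show ?thesis
    using harmonic_weights.prob_tau_pmf_atMost_le[OF hw] by blast
qed

end
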